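(* Let $\ell\ge1$ be an integer and $x$ a real number with $x\ge16\ell^{3/2}$. Then $$\sum_{\substack{\sigma\in S_\ell\\ \sigma\text{ has no fixed points}}}x^{|\mathsf{cyc}(\sigma)|}\le e^{\ell^{3/4}}\,\ell!!\,x^{\ell/2}.$$ Consequently also $\sum_{\pi}x^{|\pi|}\le e^{\ell^{3/4}}\,\ell!!\,x^{\ell/2}$, the sum over partitions $\pi$ of $\{1,\dots,\ell\}$ all of whose blocks have size at least $2$.
   Context: $S_\ell$ is the symmetric group on $\{1,\dots,\ell\}$ and $\mathsf{cyc}(\sigma)$ is its set of cycles; $|\pi|$ is the number of blocks of a partition. $n!!=n(n-2)(n-4)\cdots$ (ending at 1 or 2), with $0!!=1$. *)

theory Defs
  imports Complex_Main "HOL-Combinatorics.Combinatorics" "HOL-Library.Disjoint_Sets"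
begin

fun dfact :: "nat \<Rightarrow> nat" where
  "dfact 0 = 1"
| "dfact (Suc 0) = 1"
| "dfact (Suc (Suc n)) = Suc (Suc n) * dfact n"

definition cycs :: "nat \<Rightarrow> (nat \<Rightarrow> nat) \<Rightarrow> nat set set" where
  "cycs l \<sigma> = (\<lambda>i. orbit \<sigma> i) ` {1..l}"

end

theory Submission
  imports Defs
begin

text \<open>
  Write \<open>W(A)\<close> for either weighted sum over a finite ground set \<open>A\<close> and fix \<open>v \<in> A\<close>.
  Composing a derangement \<open>s\<close> of \<open>A\<close> with the transposition \<open>(v j)\<close>, where \<open>s j = v\<close>, cuts \<open>v\<close>
  out of its cycle: the result is a derangement of \<open>A - {v}\<close> with as many cycles or, if \<open>(v j)\<close>
  was a 2-cycle of \<open>s\<close>, a derangement of \<open>A - {v, j}\<close> with one cycle less. Deleting \<open>v\<close> from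
  its block in a partition without singletons behaves the same way. Hence
  \<open>W(A) \<le> (\<Sum>j\<in>A - {v}. W(A - {v}) + x * W(A - {v, j}))\<close>, so \<open>W(A) \<le> D(|A|)\<close> for the
  recurrence \<open>D(n + 2) = (n + 1) * (D(n + 1) + x * D(n))\<close>. With \<open>x = y^2\<close>, \<open>t = l powr (1/4)\<close>
  and \<open>y \<ge> 4 * t^3\<close>, induction gives \<open>D(k) \<le> k!! * exp(k/t) * y^k\<close> for \<open>k \<le> t^4\<close>, because
  \<open>(k + 1)!! \<le> 2 * t^2 * k!!\<close> there and \<open>2 * t^2 * exp(1/t) \<le> (exp(2/t) - 1) * y\<close>.
\<close>

section \<open>Cutting a point out of a cycle\<close>

lemma orbit_comp_transpose_subset:
  assumes perm: "permutation s" and sj: "s j = v" and sv: "s v \<noteq> v" and iv: "i \<noteq> v"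
  shows "orbit (s \<circ> Transposition.transpose v j) i \<subseteq> orbit s i - {v}"
proof -
  define t where "t = s \<circ> Transposition.transpose v j"
  have s_eq_v: "s z = v \<Longrightarrow> z = j" for z
    using bij_is_inj[OF permutation_bijective[OF perm]] sj by (metis injD)
  have t_step: "t z \<in> orbit s i \<and> t z \<noteq> v" if "z \<in> orbit s i" "z \<noteq> v" for z
  proof (cases "z = j")
    case True
    then show ?thesis using that sj sv by (auto simp: t_def intro: orbit.step)
  next
    case False
    then show ?thesis using that s_eq_v by (auto simp: t_def intro: orbit.step)
  qed
  have "y \<in> orbit s i \<and> y \<noteq> v" if "y \<in> orbit t i" for y
    using that
  proof induction
    case base
    then show ?case using t_step permutation_self_in_orbit[OF perm] iv by blast
  next
    case (step y)
    then show ?case using t_step by blast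
  qed
  then show ?thesis unfolding t_def by blast
qed

lemma orbit_subset_comp_transpose:
  assumes perm: "permutation s" and sj: "s j = v" and iv: "i \<noteq> v"
  shows "orbit s i - {v} \<subseteq> orbit (s \<circ> Transposition.transpose v j) i"
proof -
  define t where "t = s \<circ> Transposition.transpose v j"
  have "permutation t"
    unfolding t_def using perm by (intro permutation_compose permutation_swap_id)
  have s_eq_v: "s z = v \<Longrightarrow> z = j" for z
    using bij_is_inj[OF permutation_bijective[OF perm]] sj by (metis injD)
  \<comment> \<open>Along the orbit of \<open>s\<close>, \<open>t\<close> only skips \<open>v\<close>, which \<open>s\<close> enters from \<open>j\<close>.\<close>
  have invariant: "(s z \<noteq> v \<longrightarrow> s z \<in> orbit t i) \<and> (s z = v \<longrightarrow> j \<in> orbit t i)"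
    if "(z \<noteq> v \<longrightarrow> z \<in> orbit t i) \<and> (z = v \<longrightarrow> j \<in> orbit t i)" for z
  proof (cases "z = v")
    case True
    then have "t j \<in> orbit t i" using that by (blast intro: orbit.step)
    then show ?thesis using True that by (simp add: t_def)
  next
    case False
    then have z: "z \<in> orbit t i" using that by blast
    show ?thesis
    proof (cases "s z = v")
      case True
      then show ?thesis using s_eq_v z by blast
    next
      case False
      then have "z \<noteq> j" using sj by blast
      then have "t z = s z" using \<open>z \<noteq> v\<close> by (simp add: t_def)
      then show ?thesis using orbit.step[OF z] False by simp
    qed
  qed
  have "(y \<noteq> v \<longrightarrow> y \<in> orbit t i) \<and> (y = v \<longrightarrow> j \<in> orbit t i)" if "y \<in> orbit s i" for y
    using that
  proof induction
    case base
    show ?case using invariant iv permutation_self_in_orbit[OF \<open>permutation t\<close>] by blast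
  next
    case (step y)
    then show ?case using invariant by blast
  qed
  then show ?thesis unfolding t_def by blast
qed

lemma orbit_comp_transpose:
  assumes "permutation s" "s j = v" "s v \<noteq> v" "i \<noteq> v"
  shows "orbit (s \<circ> Transposition.transpose v j) i = orbit s i - {v}"
  using orbit_comp_transpose_subset[OF assms] orbit_subset_comp_transpose[OF assms(1,2,4)] by blast

lemma orbit_eq_of_mem:
  assumes "permutation s" "y \<in> orbit s x" shows "orbit s y = orbit s x"
  using assms cyclic_on_orbit' orbit_cyclic_eq3 by metis

lemma card_orbits_comp_transpose:
  assumes perm: "s permutes A" and fin: "finite A" and vA: "v \<in> A"
    and sj: "s j = v" and sv: "s v \<noteq> v"
  shows "card (orbit (s \<circ> Transposition.transpose v j) ` (A - {v})) = card (orbit s ` A)"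
proof -
  have "permutation s" using perm fin permutation_permutes by blast
  have orbits_eq: "orbit s ` (A - {v}) = orbit s ` A"
  proof -
    have "s v \<in> A - {v}" using permutes_in_image[OF perm] vA sv by simp
    moreover have "orbit s (s v) = orbit s v"
      using permutation_orbit_step[OF \<open>permutation s\<close>] .
    ultimately have "orbit s v \<in> orbit s ` (A - {v})" by (metis imageI)
    moreover have "orbit s ` A = insert (orbit s v) (orbit s ` (A - {v}))" using vA by blast
    ultimately show ?thesis by (simp add: insert_absorb)
  qed
  have "orbit (s \<circ> Transposition.transpose v j) ` (A - {v}) = (\<lambda>X. X - {v}) ` orbit s ` (A - {v})"
    using orbit_comp_transpose[OF \<open>permutation s\<close> sj sv] by (simp add: image_image)
  then have "orbit (s \<circ> Transposition.transpose v j) ` (A - {v}) = (\<lambda>X. X - {v}) ` orbit s ` A"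
    by (simp only: orbits_eq)
  moreover have "inj_on (\<lambda>X. X - {v}) (orbit s ` A)"
  proof (rule inj_onI)
    fix X Y assume "X \<in> orbit s ` A" "Y \<in> orbit s ` A" and eq: "X - {v} = Y - {v}"
    then obtain a b where X: "X = orbit s a" and Y: "Y = orbit s b" by blast
    obtain z where "z \<in> X" "z \<noteq> v"
    proof (cases "a = v")
      case True
      then show ?thesis using that[of "s v"] X sv by (simp add: orbit.base)
    next
      case False
      then show ?thesis using that[of a] X permutation_self_in_orbit[OF \<open>permutation s\<close>] by simp
    qed
    then have "z \<in> Y" using eq by blast
    then show "X = Y"
      using \<open>z \<in> X\<close> orbit_eq_of_mem[OF \<open>permutation s\<close>] X Y by metis
  qed
  ultimately show ?thesis by (simp add: card_image)
qed

lemma card_orbits_remove_fixed: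
  assumes "permutation s" "finite A" "j \<in> A" "s j = j"
  shows "card (orbit s ` A) = Suc (card (orbit s ` (A - {j})))"
proof -
  have "orbit s j = {j}" using assms(4) by (simp add: orbit_eq_singleton_iff)
  moreover have "{j} \<notin> orbit s ` (A - {j})"
  proof
    assume "{j} \<in> orbit s ` (A - {j})"
    then obtain i where "i \<noteq> j" "orbit s i = {j}" by blast
    then show False using permutation_self_in_orbit[OF assms(1), of i] by simp
  qed
  moreover have "orbit s ` A = insert (orbit s j) (orbit s ` (A - {j}))"
    using assms(3) by blast
  ultimately show ?thesis using assms(2) by simp
qed

section \<open>A recursive bound\<close>

lemma sum_le_sum_two_decodings:
  fixes f :: "'a \<Rightarrow> real"
  assumes "finite S" "finite T" "finite U"
    and "\<And>y. y \<in> T \<Longrightarrow> 0 \<le> g y" "\<And>y. y \<in> U \<Longrightarrow> 0 \<le> h y"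
    and "\<And>s. s \<in> S \<Longrightarrow> (\<exists>y\<in>T. d y = s \<and> f s \<le> g y) \<or> (\<exists>y\<in>U. e y = s \<and> f s \<le> h y)"
  shows "sum f S \<le> sum g T + sum h U"
proof -
  define S' where "S' = {s\<in>S. \<exists>y\<in>T. d y = s \<and> f s \<le> g y}"
  have "sum f S = sum f (S - S') + sum f S'"
    using \<open>finite S\<close> by (intro sum.subset_diff) (auto simp: S'_def)
  also have "sum f (S - S') \<le> sum h U"
    using assms(1,3,5,6) by (intro sum_le_included[where i = e]) (auto simp: S'_def)
  also have "sum f S' \<le> sum g T"
    using assms(1,2,4) by (intro sum_le_included[where i = d]) (auto simp: S'_def)
  finally show ?thesis by simp
qed

text \<open>Derangements of an \<open>(n+2)\<close>-set, weighted by \<open>x\<close> per cycle, satisfy this recurrence.\<close>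
fun derangement_poly :: "real \<Rightarrow> nat \<Rightarrow> real" where
  "derangement_poly x 0 = 1"
| "derangement_poly x (Suc 0) = 0"
| "derangement_poly x (Suc (Suc n)) = real (Suc n) * (derangement_poly x (Suc n) + x * derangement_poly x n)"

lemma le_derangement_poly_if_rec:
  fixes W :: "'a set \<Rightarrow> real"
  assumes x: "0 \<le> x" and W0: "W {} \<le> 1" and W1: "\<And>a. W {a} \<le> 0"
    and rec: "\<And>A v. finite A \<Longrightarrow> v \<in> A \<Longrightarrow> W A \<le> (\<Sum>j\<in>A - {v}. W (A - {v}) + x * W (A - {v, j}))"
    and "finite A"
  shows "W A \<le> derangement_poly x (card A)"
  using \<open>finite A\<close>
proof (induction "card A" arbitrary: A rule: less_induct)
  case less
  consider "A = {}" | a where "A = {a}" | v n where "v \<in> A" "card A = Suc (Suc n)"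
    by (metis card_0_eq card_1_singletonE card_gt_0_iff less.prems not0_implies_Suc One_nat_def ex_in_conv)
  then show ?case
  proof cases
    case 1
    then show ?thesis using W0 by simp
  next
    case 2
    then show ?thesis using W1 by simp
  next
    case 3
    have card_v: "card (A - {v}) = Suc n" using 3 less.prems by simp
    have IH1: "W (A - {v}) \<le> derangement_poly x (Suc n)"
      using less.hyps[of "A - {v}"] card_v 3 less.prems by simp
    have IH2: "W (A - {v, j}) \<le> derangement_poly x n" if "j \<in> A - {v}" for j
    proof -
      have "card (A - {v, j}) = n"
        using card_v that less.prems by (simp add: Diff_insert2[of A v "{j}"])
      then show ?thesis using less.hyps[of "A - {v, j}"] 3 less.prems by simp
    qed
    have "W A \<le> (\<Sum>j\<in>A - {v}. W (A - {v}) + x * W (A - {v, j}))"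
      using rec less.prems 3 by blast
    also have "\<dots> \<le> (\<Sum>j\<in>A - {v}. derangement_poly x (Suc n) + x * derangement_poly x n)"
      using IH1 IH2 x by (intro sum_mono add_mono mult_left_mono) auto
    also have "\<dots> = derangement_poly x (card A)" using card_v 3 by simp
    finally show ?thesis .
  qed
qed

section \<open>Derangements\<close>

definition derangements :: "'a set \<Rightarrow> ('a \<Rightarrow> 'a) set" where
  "derangements A = {s. s permutes A \<and> (\<forall>i\<in>A. s i \<noteq> i)}"

definition derangement_sum :: "real \<Rightarrow> 'a set \<Rightarrow> real" where
  "derangement_sum x A = (\<Sum>s\<in>derangements A. x ^ card (orbit s ` A))"

lemma finite_derangements: "finite A \<Longrightarrow> finite (derangements A)"
  by (rule finite_subset[of _ "{s. s permutes A}"]) (auto simp: derangements_def finite_permutations)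

lemma derangements_remove_2cycle:
  assumes "s \<in> derangements A" "finite A" "v \<in> A" "j \<in> A" "s j = v" "s v = j"
  shows "s \<circ> Transposition.transpose v j \<in> derangements (A - {v, j})"
    and "card (orbit s ` A) = Suc (card (orbit (s \<circ> Transposition.transpose v j) ` (A - {v, j})))"
proof -
  define t where "t = s \<circ> Transposition.transpose v j"
  have perm: "s permutes A" and der: "\<forall>i\<in>A. s i \<noteq> i"
    using assms(1) by (auto simp: derangements_def)
  have "j \<noteq> v" using der assms(3,6) by blast
  have "t permutes A"
    unfolding t_def using assms(3,4) perm by (intro permutes_compose permutes_swap_id)
  have "t v = v" "t j = j" using assms(5,6) by (auto simp: t_def)
  have "t permutes (A - {v, j})"
    using \<open>t v = v\<close> \<open>t j = j\<close> by (intro permutes_superset[OF \<open>t permutes A\<close>]) blast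
  moreover have "t i \<noteq> i" if "i \<in> A - {v, j}" for i
    using that der by (simp add: t_def)
  ultimately show "t \<in> derangements (A - {v, j})" by (simp add: derangements_def)
  have "card (orbit s ` A) = card (orbit t ` (A - {v}))"
    unfolding t_def using card_orbits_comp_transpose[OF perm assms(2,3,5)] der assms(3) by simp
  also have "\<dots> = Suc (card (orbit t ` (A - {v} - {j})))"
    using \<open>t permutes A\<close> \<open>t j = j\<close> \<open>j \<noteq> v\<close> assms(2,4) permutation_permutes
    by (intro card_orbits_remove_fixed) auto
  finally show "card (orbit s ` A) = Suc (card (orbit t ` (A - {v, j})))"
    by (simp only: Diff_insert2[symmetric] insert_commute)
qed

lemma derangements_remove_point:
  assumes "s \<in> derangements A" "finite A" "v \<in> A" "j \<in> A" "s j = v" "s v \<noteq> j"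
  shows "s \<circ> Transposition.transpose v j \<in> derangements (A - {v})"
    and "card (orbit s ` A) = card (orbit (s \<circ> Transposition.transpose v j) ` (A - {v}))"
proof -
  define t where "t = s \<circ> Transposition.transpose v j"
  have perm: "s permutes A" and der: "\<forall>i\<in>A. s i \<noteq> i"
    using assms(1) by (auto simp: derangements_def)
  have "t permutes A"
    unfolding t_def using assms(3,4) perm by (intro permutes_compose permutes_swap_id)
  have "t v = v" using assms(5) by (simp add: t_def)
  have "t permutes (A - {v})"
    using \<open>t v = v\<close> by (intro permutes_superset[OF \<open>t permutes A\<close>]) blast
  moreover have "t i \<noteq> i" if "i \<in> A - {v}" for i
  proof (cases "i = j")
    case True
    then show ?thesis using assms(6) by (simp add: t_def)
  next
    case False
    then show ?thesis using that der by (simp add: t_def)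
  qed
  ultimately show "t \<in> derangements (A - {v})" by (simp add: derangements_def)
  show "card (orbit s ` A) = card (orbit t ` (A - {v}))"
    unfolding t_def using card_orbits_comp_transpose[OF perm assms(2,3,5)] der assms(3) by simp
qed

lemma derangements_decompose:
  assumes s: "s \<in> derangements A" and fin: "finite A" and vA: "v \<in> A"
  obtains j t where "j \<in> A - {v}" "s = t \<circ> Transposition.transpose v j"
    and "t \<in> derangements (A - {v}) \<and> card (orbit s ` A) = card (orbit t ` (A - {v}))
      \<or> t \<in> derangements (A - {v, j}) \<and> card (orbit s ` A) = Suc (card (orbit t ` (A - {v, j})))"
proof -
  have "s permutes A" using s by (simp add: derangements_def)
  define j where "j = inv s v"
  have j: "j \<in> A" "s j = v"
    using permutes_in_image[OF permutes_inv[OF \<open>s permutes A\<close>]] vA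
      permutes_inverses(1)[OF \<open>s permutes A\<close>] by (simp_all add: j_def)
  moreover have "s v \<noteq> v" using s vA by (simp add: derangements_def)
  ultimately have "j \<in> A - {v}" by auto
  define t where "t = s \<circ> Transposition.transpose v j"
  have "s = t \<circ> Transposition.transpose v j" by (simp add: t_def comp_assoc)
  moreover have "t \<in> derangements (A - {v}) \<and> card (orbit s ` A) = card (orbit t ` (A - {v}))
      \<or> t \<in> derangements (A - {v, j}) \<and> card (orbit s ` A) = Suc (card (orbit t ` (A - {v, j})))"
    using derangements_remove_point[OF s fin vA j, folded t_def]
      derangements_remove_2cycle[OF s fin vA j, folded t_def] by blast
  ultimately show thesis using that \<open>j \<in> A - {v}\<close> by blast
qed

lemma derangement_sum_rec:
  assumes fin: "finite A" and vA: "v \<in> A" and x: "0 \<le> x"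
  shows "derangement_sum x A
    \<le> (\<Sum>j\<in>A - {v}. derangement_sum x (A - {v}) + x * derangement_sum x (A - {v, j}))"
proof -
  define T where "T = Sigma (A - {v}) (\<lambda>_. derangements (A - {v}))"
  define U where "U = Sigma (A - {v}) (\<lambda>j. derangements (A - {v, j}))"
  define g where "g = (\<lambda>(j::'a, t). x ^ card (orbit t ` (A - {v})))"
  define h where "h = (\<lambda>(j, t). x * x ^ card (orbit t ` (A - {v, j})))"
  define d where "d = (\<lambda>(j, t :: 'a \<Rightarrow> 'a). t \<circ> Transposition.transpose v j)"
  have "derangement_sum x A \<le> sum g T + sum h U"
    unfolding derangement_sum_def
  proof (rule sum_le_sum_two_decodings)
    show "finite (derangements A)" "finite T" "finite U"
      using fin by (auto simp: T_def U_def finite_derangements)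
    show "0 \<le> g y" "0 \<le> h y" for y
      using x by (auto simp: g_def h_def split: prod.splits)
    fix s assume "s \<in> derangements A"
    then obtain j t where j: "j \<in> A - {v}" and "d (j, t) = s"
      and cases: "t \<in> derangements (A - {v}) \<and> card (orbit s ` A) = card (orbit t ` (A - {v}))
        \<or> t \<in> derangements (A - {v, j}) \<and> card (orbit s ` A) = Suc (card (orbit t ` (A - {v, j})))"
      by (rule derangements_decompose[OF _ fin vA]) (simp add: d_def)
    from cases show "(\<exists>y\<in>T. d y = s \<and> x ^ card (orbit s ` A) \<le> g y)
      \<or> (\<exists>y\<in>U. d y = s \<and> x ^ card (orbit s ` A) \<le> h y)"
    proof (elim disjE conjE)
      assume "t \<in> derangements (A - {v})" "card (orbit s ` A) = card (orbit t ` (A - {v}))"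
      then show ?thesis using j \<open>d (j, t) = s\<close>
        by (intro disjI1 bexI[of _ "(j, t)"]) (simp_all add: T_def g_def)
    next
      assume "t \<in> derangements (A - {v, j})" "card (orbit s ` A) = Suc (card (orbit t ` (A - {v, j})))"
      then show ?thesis using j \<open>d (j, t) = s\<close>
        by (intro disjI2 bexI[of _ "(j, t)"]) (simp_all add: U_def h_def)
    qed
  qed
  moreover have "sum g T = (\<Sum>j\<in>A - {v}. derangement_sum x (A - {v}))"
    unfolding T_def g_def derangement_sum_def using fin
    by (subst sum.Sigma) (auto simp: finite_derangements)
  moreover have "sum h U = (\<Sum>j\<in>A - {v}. x * derangement_sum x (A - {v, j}))"
    unfolding U_def h_def derangement_sum_def sum_distrib_left using fin
    by (subst sum.Sigma) (auto simp: finite_derangements)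
  ultimately show ?thesis by (simp only: sum.distrib)
qed

lemma derangement_sum_le_derangement_poly:
  assumes "0 \<le> x" "finite A"
  shows "derangement_sum x A \<le> derangement_poly x (card A)"
proof (rule le_derangement_poly_if_rec[OF assms(1) _ _ derangement_sum_rec[OF _ _ assms(1)] assms(2)])
  have "derangements ({} :: 'a set) = {id}" by (auto simp: derangements_def)
  then show "derangement_sum x ({} :: 'a set) \<le> 1" unfolding derangement_sum_def by simp
  have "derangements {a} = {}" for a :: 'a by (auto simp: derangements_def)
  then show "derangement_sum x {a} \<le> 0" for a :: 'a by (simp add: derangement_sum_def)
qed

section \<open>Partitions without singleton blocks\<close>

definition nonsingleton_partitions :: "'a set \<Rightarrow> 'a set set set" where
  "nonsingleton_partitions A = {P. partition_on A P \<and> (\<forall>B\<in>P. 2 \<le> card B)}"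

definition partition_sum :: "real \<Rightarrow> 'a set \<Rightarrow> real" where
  "partition_sum x A = (\<Sum>P\<in>nonsingleton_partitions A. x ^ card P)"

lemma finite_nonsingleton_partitions: "finite A \<Longrightarrow> finite (nonsingleton_partitions A)"
  by (rule finite_subset[OF _ finitely_many_partition_on]) (auto simp: nonsingleton_partitions_def)

lemma partition_on_block_eq:
  "partition_on A P \<Longrightarrow> B \<in> P \<Longrightarrow> C \<in> P \<Longrightarrow> z \<in> B \<Longrightarrow> z \<in> C \<Longrightarrow> B = C"
  using disjointD[OF partition_onD2] by blast

lemma card_image_eq_if_image_image:
  assumes "finite A" "g ` f ` A = A"
  shows "card (f ` A) = card A"
proof (rule antisym)
  show "card (f ` A) \<le> card A" using assms(1) by (rule card_image_le)
  have "card (g ` f ` A) \<le> card (f ` A)" using assms(1) by (intro card_image_le finite_imageI)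
  then show "card A \<le> card (f ` A)" using assms(2) by simp
qed

lemma nonsingleton_partitions_remove_pair_block:
  assumes P: "P \<in> nonsingleton_partitions A" and "finite A" "{v, j} \<in> P"
  shows "P - {{v, j}} \<in> nonsingleton_partitions (A - {v, j})"
    and "card P = Suc (card (P - {{v, j}}))"
proof -
  have part: "partition_on A P" and blocks: "\<forall>B\<in>P. 2 \<le> card B"
    using P by (auto simp: nonsingleton_partitions_def)
  have "disjnt {v, j} (\<Union>(P - {{v, j}}))"
    using partition_on_block_eq[OF part \<open>{v, j} \<in> P\<close>] by (auto simp: disjnt_def)
  moreover have "partition_on A (insert {v, j} (P - {{v, j}}))"
    using part \<open>{v, j} \<in> P\<close> by (simp add: insert_absorb)
  ultimately have "partition_on (A - {v, j}) (P - {{v, j}})"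
    using partition_on_insert by blast
  then show "P - {{v, j}} \<in> nonsingleton_partitions (A - {v, j})"
    using blocks by (simp add: nonsingleton_partitions_def)
  show "card P = Suc (card (P - {{v, j}}))"
    using finite_elements[OF \<open>finite A\<close> part] \<open>{v, j} \<in> P\<close> by (rule card_Suc_Diff1[symmetric])
qed

lemma nonsingleton_partitions_remove_point:
  assumes P: "P \<in> nonsingleton_partitions A" and "finite A"
    and B: "B \<in> P" "v \<in> B" "j \<in> B" "v \<noteq> j" "card B \<noteq> 2"
  defines "Q \<equiv> (\<lambda>C. C - {v}) ` P"
  shows "Q \<in> nonsingleton_partitions (A - {v})"
    and "(\<lambda>D. if j \<in> D then insert v D else D) ` Q = P"
    and "card Q = card P"
proof -
  have part: "partition_on A P" and blocks: "\<forall>C\<in>P. 2 \<le> card C"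
    using P by (auto simp: nonsingleton_partitions_def)
  have other: "v \<notin> C" "j \<notin> C" if "C \<in> P" "C \<noteq> B" for C
    using partition_on_block_eq[OF part B(1) that(1)] B that(2) by blast+
  have card_Q: "2 \<le> card (C - {v})" if "C \<in> P" for C
  proof (cases "C = B")
    case True
    have "2 \<le> card B" using blocks B(1) by blast
    then have "finite B" by (metis card.infinite not_numeral_le_zero)
    then have "card (B - {v}) = card B - 1" using B(2) by simp
    then show ?thesis using \<open>2 \<le> card B\<close> B(5) unfolding True by linarith
  next
    case False
    then show ?thesis using other(1)[OF that] blocks that by simp
  qed
  have Q_blocks: "\<forall>D\<in>Q. 2 \<le> card D" using card_Q by (simp add: Q_def)
  then have "{} \<notin> Q" by (metis card.empty not_numeral_le_zero)
  moreover have "partition_on (A - {v}) (Q - {{}})"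
    unfolding Q_def using part by (rule partition_on_transform) (auto simp: disjnt_def)
  ultimately show "Q \<in> nonsingleton_partitions (A - {v})"
    using Q_blocks by (simp add: nonsingleton_partitions_def)
  have "(if j \<in> C - {v} then insert v (C - {v}) else C - {v}) = C" if "C \<in> P" for C
  proof (cases "C = B")
    case True
    then show ?thesis using B(2-4) by auto
  next
    case False
    then show ?thesis using other[OF that False] by simp
  qed
  then show recover: "(\<lambda>D. if j \<in> D then insert v D else D) ` Q = P"
    unfolding Q_def image_image by simp
  show "card Q = card P"
    unfolding Q_def using finite_elements[OF \<open>finite A\<close> part] recover[unfolded Q_def]
    by (rule card_image_eq_if_image_image)
qed

lemma nonsingleton_partitions_decompose:
  assumes P: "P \<in> nonsingleton_partitions A" and fin: "finite A" and vA: "v \<in> A"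
  obtains j Q where "j \<in> A - {v}"
    and "Q \<in> nonsingleton_partitions (A - {v}) \<and> P = (\<lambda>D. if j \<in> D then insert v D else D) ` Q
        \<and> card P = card Q
      \<or> Q \<in> nonsingleton_partitions (A - {v, j}) \<and> P = insert {v, j} Q \<and> card P = Suc (card Q)"
proof -
  have part: "partition_on A P" and blocks: "\<forall>B\<in>P. 2 \<le> card B"
    using P by (auto simp: nonsingleton_partitions_def)
  obtain B where B: "B \<in> P" "v \<in> B" using partition_onD1[OF part] vA by blast
  have "2 \<le> card B" using blocks B(1) by blast
  then have "finite B" by (metis card.infinite not_numeral_le_zero)
  have "\<not> B \<subseteq> {v}"
  proof
    assume "B \<subseteq> {v}"
    then have "card B \<le> card {v}" by (rule card_mono[rotated]) simp
    then show False using \<open>2 \<le> card B\<close> by simp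
  qed
  then obtain j where j: "j \<in> B" "j \<noteq> v" by blast
  then have "j \<in> A - {v}" using B(1) partition_onD1[OF part] by blast
  show thesis
  proof (cases "card B = 2")
    case True
    have "{v, j} = B"
      using B(2) j \<open>finite B\<close> True by (intro card_subset_eq) auto
    then have "{v, j} \<in> P" using B(1) by simp
    then have "P = insert {v, j} (P - {{v, j}})" by blast
    then show thesis
      using that[OF \<open>j \<in> A - {v}\<close>] nonsingleton_partitions_remove_pair_block[OF P fin \<open>{v, j} \<in> P\<close>]
      by blast
  next
    case False
    then show thesis
      using that[OF \<open>j \<in> A - {v}\<close>] nonsingleton_partitions_remove_point[OF P fin B j(1) j(2)[symmetric]]
      by (metis (no_types, lifting))
  qed
qed

lemma partition_sum_rec:
  assumes fin: "finite A" and vA: "v \<in> A" and x: "0 \<le> x"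
  shows "partition_sum x A
    \<le> (\<Sum>j\<in>A - {v}. partition_sum x (A - {v}) + x * partition_sum x (A - {v, j}))"
proof -
  define T where "T = Sigma (A - {v}) (\<lambda>_. nonsingleton_partitions (A - {v}))"
  define U where "U = Sigma (A - {v}) (\<lambda>j. nonsingleton_partitions (A - {v, j}))"
  define g where "g = (\<lambda>(j::'a, Q::'a set set). x ^ card Q)"
  define h where "h = (\<lambda>(j::'a, Q::'a set set). x * x ^ card Q)"
  define d where "d = (\<lambda>(j, Q). (\<lambda>D. if j \<in> D then insert v D else D) ` Q)"
  define e where "e = (\<lambda>(j, Q). insert {v, j} Q)"
  have "partition_sum x A \<le> sum g T + sum h U"
    unfolding partition_sum_def
  proof (rule sum_le_sum_two_decodings)
    show "finite (nonsingleton_partitions A)" "finite T" "finite U"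
      using fin by (auto simp: T_def U_def finite_nonsingleton_partitions)
    show "0 \<le> g y" "0 \<le> h y" for y
      using x by (auto simp: g_def h_def split: prod.splits)
    fix P assume "P \<in> nonsingleton_partitions A"
    then obtain j Q where j: "j \<in> A - {v}"
      and cases: "Q \<in> nonsingleton_partitions (A - {v}) \<and> P = d (j, Q) \<and> card P = card Q
        \<or> Q \<in> nonsingleton_partitions (A - {v, j}) \<and> P = e (j, Q) \<and> card P = Suc (card Q)"
      by (rule nonsingleton_partitions_decompose[OF _ fin vA]) (simp add: d_def e_def)
    from cases show "(\<exists>y\<in>T. d y = P \<and> x ^ card P \<le> g y) \<or> (\<exists>y\<in>U. e y = P \<and> x ^ card P \<le> h y)"
    proof (elim disjE conjE)
      assume "Q \<in> nonsingleton_partitions (A - {v})" "P = d (j, Q)" "card P = card Q"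
      then show ?thesis using j by (intro disjI1 bexI[of _ "(j, Q)"]) (simp_all add: T_def g_def)
    next
      assume "Q \<in> nonsingleton_partitions (A - {v, j})" "P = e (j, Q)" "card P = Suc (card Q)"
      then show ?thesis using j by (intro disjI2 bexI[of _ "(j, Q)"]) (simp_all add: U_def h_def)
    qed
  qed
  moreover have "sum g T = (\<Sum>j\<in>A - {v}. partition_sum x (A - {v}))"
    unfolding T_def g_def partition_sum_def using fin
    by (subst sum.Sigma) (auto simp: finite_nonsingleton_partitions)
  moreover have "sum h U = (\<Sum>j\<in>A - {v}. x * partition_sum x (A - {v, j}))"
    unfolding U_def h_def partition_sum_def sum_distrib_left using fin
    by (subst sum.Sigma) (auto simp: finite_nonsingleton_partitions)
  ultimately show ?thesis by (simp only: sum.distrib)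
qed

lemma partition_sum_le_derangement_poly:
  assumes "0 \<le> x" "finite A"
  shows "partition_sum x A \<le> derangement_poly x (card A)"
proof (rule le_derangement_poly_if_rec[OF assms(1) _ _ partition_sum_rec[OF _ _ assms(1)] assms(2)])
  have "nonsingleton_partitions ({} :: 'a set) = {{}}"
    by (auto simp: nonsingleton_partitions_def partition_on_empty)
  then show "partition_sum x ({} :: 'a set) \<le> 1" unfolding partition_sum_def by simp
  have "nonsingleton_partitions {a} = {}" for a :: 'a
  proof -
    have "\<exists>B\<in>P. \<not> 2 \<le> card B" if part: "partition_on {a} P" for P
    proof -
      obtain B where "B \<in> P" "a \<in> B" using partition_onD1[OF part] by blast
      moreover have "B \<subseteq> {a}" using partition_onD1[OF part] \<open>B \<in> P\<close> by blast
      then have "card B \<le> card {a}" by (rule card_mono[rotated]) simp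
      ultimately show ?thesis by (intro bexI[of _ B]) simp_all
    qed
    then show ?thesis by (auto simp: nonsingleton_partitions_def)
  qed
  then show "partition_sum x {a} \<le> 0" for a :: 'a by (simp add: partition_sum_def)
qed

section \<open>Growth of the recurrence\<close>

text \<open>The second bound only serves to carry the induction for the first.\<close>
lemma dfact_Suc_sq_bounds:
  "real (dfact (Suc n))^2 \<le> 2 * (real n + 1) * real (dfact n)^2 \<and>
   (real n + 2) * real (dfact n)^2 \<le> 2 * real (dfact (Suc n))^2"
proof (induction n)
  case 0
  then show ?case by simp
next
  case (Suc n)
  define a where "a = real (dfact n)"
  define b where "b = real (dfact (Suc n))"
  have next_a: "real (dfact (Suc (Suc n))) = (real n + 2) * a" by (simp add: a_def algebra_simps)
  have IH1: "b^2 \<le> 2 * (real n + 1) * a^2" and IH2: "(real n + 2) * a^2 \<le> 2 * b^2"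
    using Suc by (simp_all add: a_def b_def)
  have "((real n + 2) * a)^2 = (real n + 2) * ((real n + 2) * a^2)" by (simp add: power2_eq_square)
  also have "\<dots> \<le> (real n + 2) * (2 * b^2)" using IH2 by (intro mult_left_mono) auto
  finally have 1: "((real n + 2) * a)^2 \<le> 2 * (real (Suc n) + 1) * b^2" by (simp add: algebra_simps)
  have "(real n + 3) * b^2 \<le> (real n + 3) * (2 * (real n + 1) * a^2)"
    using IH1 by (intro mult_left_mono) auto
  also have "\<dots> = ((real n + 3) * (2 * (real n + 1))) * a^2" by (simp add: algebra_simps)
  also have "\<dots> \<le> 2 * (real n + 2)^2 * a^2"
    by (intro mult_right_mono) (auto simp: power2_eq_square algebra_simps)
  finally have "(real n + 3) * b^2 \<le> 2 * (real n + 2)^2 * a^2" .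
  then have 2: "(real (Suc n) + 2) * b^2 \<le> 2 * ((real n + 2) * a)^2"
    by (simp add: power_mult_distrib mult.assoc add.commute)
  show ?case using 1 2 next_a by (simp add: b_def)
qed

lemma dfact_Suc_le:
  fixes t :: real
  assumes "real n + 1 \<le> t^4"
  shows "real (dfact (Suc n)) \<le> 2 * t^2 * real (dfact n)"
proof (rule power2_le_imp_le)
  have "real (dfact (Suc n))^2 \<le> 2 * (real n + 1) * real (dfact n)^2"
    using dfact_Suc_sq_bounds by blast
  also have "\<dots> \<le> 2 * t^4 * real (dfact n)^2"
    using assms by (intro mult_right_mono) auto
  also have "\<dots> \<le> (2 * t^2 * real (dfact n))^2"
    by (simp add: power_mult_distrib flip: power_mult)
  finally show "real (dfact (Suc n))^2 \<le> (2 * t^2 * real (dfact n))^2" .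
qed simp

lemma two_mul_sq_exp_inverse_le:
  fixes t y :: real
  assumes "1 \<le> t" "4 * t^3 \<le> y"
  shows "2 * t^2 * exp (1/t) \<le> (exp (1/t)^2 - 1) * y"
proof -
  have "0 \<le> t^3" using assms(1) by simp
  have "exp (1/t) \<le> exp 1" using assms(1) by simp
  also have "\<dots> \<le> 3" using exp_le by simp
  finally have "2 * t^2 * exp (1/t) \<le> (2/t) * (3 * t^3)"
    using assms(1) by (simp add: power2_eq_square power3_eq_cube field_simps)
  also have "\<dots> \<le> (exp (1/t)^2 - 1) * y"
  proof (rule mult_mono)
    have "exp (1/t)^2 = exp (2/t)" by (simp flip: exp_of_nat_mult)
    then show "2/t \<le> exp (1/t)^2 - 1" using exp_ge_add_one_self[of "2/t"] by linarith
    show "3 * t^3 \<le> y" using assms \<open>0 \<le> t^3\<close> by linarith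
  qed (use assms in auto)
  finally show ?thesis .
qed

lemma derangement_poly_sq_le:
  fixes t y :: real
  assumes t: "1 \<le> t" and y: "4 * t^3 \<le> y" and k: "real k \<le> t^4"
  shows "derangement_poly (y^2) k \<le> real (dfact k) * exp (1/t)^k * y^k"
proof -
  have "1 \<le> t^3" using t by (simp add: one_le_power)
  then have "0 < y" using y by linarith
  show ?thesis
    using k
  proof (induction k rule: induct_nat_012)
    case (ge2 n)
    define \<beta> where "\<beta> = exp (1/t)"
    define M where "M = real (dfact n) * \<beta>^n * y^n"
    have "0 \<le> M" using \<open>0 < y\<close> by (simp add: M_def \<beta>_def)
    have "real (dfact (Suc n)) * \<beta>^Suc n * y^Suc n
        \<le> (2 * t^2 * real (dfact n)) * \<beta>^Suc n * y^Suc n"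
      using dfact_Suc_le ge2.prems \<open>0 < y\<close> by (intro mult_right_mono) (auto simp: \<beta>_def)
    also have "\<dots> = M * (2 * t^2 * \<beta>) * y" by (simp add: M_def algebra_simps)
    also have "\<dots> \<le> M * ((\<beta>^2 - 1) * y) * y"
      using two_mul_sq_exp_inverse_le[OF t y] \<open>0 \<le> M\<close> \<open>0 < y\<close>
      by (intro mult_right_mono mult_left_mono) (auto simp: \<beta>_def)
    finally have IH1: "derangement_poly (y^2) (Suc n) \<le> M * (\<beta>^2 - 1) * y^2"
      using ge2.IH(2) ge2.prems by (simp add: \<beta>_def power2_eq_square algebra_simps)
    have IH0: "y^2 * derangement_poly (y^2) n \<le> y^2 * M"
      using ge2.IH(1) ge2.prems by (intro mult_left_mono) (auto simp: M_def \<beta>_def)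
    have "derangement_poly (y^2) (Suc (Suc n))
        = (real n + 1) * (derangement_poly (y^2) (Suc n) + y^2 * derangement_poly (y^2) n)"
      by simp
    also have "\<dots> \<le> (real n + 1) * (M * (\<beta>^2 - 1) * y^2 + y^2 * M)"
      using IH1 IH0 by (intro mult_left_mono) (auto intro: add_mono)
    also have "\<dots> = (real n + 1) * (M * \<beta>^2 * y^2)" by (simp add: algebra_simps)
    also have "\<dots> \<le> (real n + 2) * (M * \<beta>^2 * y^2)"
      using \<open>0 \<le> M\<close> by (intro mult_right_mono) auto
    also have "\<dots> = real (dfact (Suc (Suc n))) * \<beta>^Suc (Suc n) * y^Suc (Suc n)"
      by (simp add: M_def power2_eq_square algebra_simps)
    finally show ?case by (simp add: \<beta>_def)
  qed (use \<open>0 < y\<close> in auto)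
qed

lemma derangement_poly_le:
  fixes x :: real
  assumes l: "1 \<le> l" and x: "16 * real l powr (3/2) \<le> x"
  shows "derangement_poly x l \<le> exp (real l powr (3/4)) * real (dfact l) * x powr (real l / 2)"
proof -
  define t where "t = real l powr (1/4)"
  define y where "y = sqrt x"
  have t_pow: "t ^ n = real l powr (real n / 4)" for n
    unfolding t_def using l by (subst powr_power) auto
  have "1 \<le> t" unfolding t_def using l by (intro ge_one_powr_ge_zero) auto
  have "0 \<le> 16 * real l powr (3/2)" by simp
  then have "0 \<le> x" using x by linarith
  then have "x = y^2" "0 \<le> y" by (simp_all add: y_def)
  have "(4 * t^3)^2 = 16 * t^6" by (simp add: power2_eq_square power_add[symmetric])
  also have "t^6 = real l powr (3/2)" using t_pow[of 6] by simp
  finally have "(4 * t^3)^2 \<le> y^2" using x \<open>x = y^2\<close> by linarith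
  then have "4 * t^3 \<le> y" using \<open>0 \<le> y\<close> by (rule power2_le_imp_le)
  have "t^4 = real l" using t_pow[of 4] by simp
  have "derangement_poly x l \<le> real (dfact l) * exp (1/t)^l * y^l"
    using derangement_poly_sq_le[OF \<open>1 \<le> t\<close> \<open>4 * t^3 \<le> y\<close>, of l] \<open>t^4 = real l\<close> \<open>x = y^2\<close>
    by simp
  moreover have "exp (1/t)^l = exp (real l powr (3/4))"
  proof -
    have "t^4 = t^3 * t" by (simp add: power3_eq_cube power4_eq_xxxx)
    then have "real l * (1/t) = t^3" using \<open>t^4 = real l\<close> \<open>1 \<le> t\<close> by (simp add: field_simps)
    then have "exp (1/t)^l = exp (t^3)" by (simp flip: exp_of_nat_mult)
    then show ?thesis using t_pow[of 3] by simp
  qed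
  moreover have "y^l = x powr (real l / 2)"
  proof -
    have "1 \<le> t^3" using \<open>1 \<le> t\<close> by (simp add: one_le_power)
    then have "0 < y" using \<open>4 * t^3 \<le> y\<close> by linarith
    have "x powr (real l / 2) = (y powr 2) powr (real l / 2)" using \<open>x = y^2\<close> \<open>0 \<le> y\<close> by simp
    also have "\<dots> = y powr real l" by (simp add: powr_powr)
    also have "\<dots> = y^l" using \<open>0 < y\<close> by (rule powr_realpow)
    finally show ?thesis by simp
  qed
  ultimately show ?thesis by (simp add: mult_ac)
qed

theorem propositionD6:
  fixes l :: nat and x :: real
  assumes "l \<ge> 1" and "x \<ge> 16 * real l powr (3/2)"
  shows "(\<Sum>\<sigma> \<in> {\<sigma>. \<sigma> permutes {1..l} \<and> (\<forall>i\<in>{1..l}. \<sigma> i \<noteq> i)}.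
            x ^ card (cycs l \<sigma>))
           \<le> exp (real l powr (3/4)) * real (dfact l) * x powr (real l / 2)
       \<and> (\<Sum>P \<in> {P. partition_on {1..l} P \<and> (\<forall>B\<in>P. card B \<ge> 2)}. x ^ card P)
           \<le> exp (real l powr (3/4)) * real (dfact l) * x powr (real l / 2)"
proof -
  have "0 \<le> 16 * real l powr (3/2)" by simp
  then have "0 \<le> x" using assms(2) by linarith
  have "derangement_sum x {1..l} \<le> derangement_poly x l"
    and "partition_sum x {1..l} \<le> derangement_poly x l"
    using derangement_sum_le_derangement_poly[OF \<open>0 \<le> x\<close>, of "{1..l}"]
      partition_sum_le_derangement_poly[OF \<open>0 \<le> x\<close>, of "{1..l}"] by simp_all
  with derangement_poly_le[OF assms] show ?thesis
    unfolding derangement_sum_def derangements_def cycs_def partition_sum_def nonsingleton_partitions_def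
    by linarith
qed

end
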